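(* Let $K=\{\sum_{i=1}^\infty a_i3^{-i}: a_i\in\{0,1\}\text{ for all } i\ge1\}$, and define $f,g\colon K\to\mathbb{R}$ by $f(x)=\sum_{i=1}^\infty a_{2i-1}3^{-i}$ and $g(x)=\sum_{i=1}^\infty a_{2i}3^{-i}$ for $x=\sum_{i=1}^\infty a_i3^{-i}\in K$. Then $f,g$ are continuous and \[ \overline{\dim}_B\operatorname{graph}(f+g)=\frac12+\frac{\log 2}{\log 3}>1,\qquad \overline{\dim}_B\operatorname{graph}(f)=\overline{\dim}_B\operatorname{graph}(g)=\frac{\log 8}{\log 9}<1. \]
   Context: $\operatorname{graph}(h)=\{(x,h(x)):x\in K\}\subset\mathbb{R}^2$ with the Euclidean metric. $\overline{\dim}_B$ denotes upper box dimension: for a non-empty bounded $X$, $\overline{\dim}_B X=\limsup_n \frac{\log N_n(X)}{n\log 2}$, where $N_n(X)$ is the maximal cardinality of a subset of $X$ whose points are pairwise at distance $>2^{-n}$. *)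

theory Defs
  imports "HOL-Analysis.Analysis" "HOL-Library.Liminf_Limsup"
begin

text \<open>Digit sequences are a :: nat => bool, where a i encodes the paper's digit a_(i+1).\<close>

definition digit :: "bool \<Rightarrow> real" where
  "digit b = (if b then 1 else 0)"

definition cantor_pt :: "(nat \<Rightarrow> bool) \<Rightarrow> real" where
  "cantor_pt a = (\<Sum>i. digit (a i) / 3 ^ (i + 1))"

definition cantorK :: "real set" where
  "cantorK = range cantor_pt"

definition cantor_f :: "real \<Rightarrow> real" where
  "cantor_f x = (THE y. \<exists>a. x = cantor_pt a \<and> y = (\<Sum>j. digit (a (2 * j)) / 3 ^ (j + 1)))"

definition cantor_g :: "real \<Rightarrow> real" where
  "cantor_g x = (THE y. \<exists>a. x = cantor_pt a \<and> y = (\<Sum>j. digit (a (2 * j + 1)) / 3 ^ (j + 1)))"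

definition graph_on :: "real set \<Rightarrow> (real \<Rightarrow> real) \<Rightarrow> (real \<times> real) set" where
  "graph_on A h = {(x, h x) | x. x \<in> A}"

definition sep_number :: "'a::metric_space set \<Rightarrow> nat \<Rightarrow> nat" where
  "sep_number X n = Sup {card S | S. finite S \<and> S \<subseteq> X \<and>
      (\<forall>x\<in>S. \<forall>y\<in>S. x \<noteq> y \<longrightarrow> dist x y > (1/2) ^ n)}"

definition upper_box_dim :: "'a::metric_space set \<Rightarrow> ereal" where
  "upper_box_dim X = limsup (\<lambda>n. ereal (ln (real (sep_number X n)) / (real n * ln 2)))"

end

theory Submission
  imports Defs
begin

text \<open>
  Write x = \<Sum>i. a(i) 3^-(i+1) with binary digits a and let h be f, g or f + g. Then
  h(x) = \<Sum>j. \<phi>(a(2j), a(2j+1)) 3^-(j+1), where the pair digit \<phi> takes m = 2 values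
  for f and g and m = 3 values for f + g. Up to distance 9^-k a point of the graph is
  determined by the first 2k binary digits of x, which also fix the first k pair digits,
  together with the next k pair digits; conversely, points whose digits vanish beyond
  position 4k and whose such data differ are at distance at least 9^-k / 2. So the graph
  has (4m)^k separated points at scale 9^-k and upper box dimension log (4m) / log 9, i.e.
  log 8 / log 9 for f and g and log 12 / log 9 = 1/2 + log 2 / log 3 for f + g.
\<close>

definition ternary_sum :: "(nat \<Rightarrow> real) \<Rightarrow> real" where
  "ternary_sum c = (\<Sum>i. c i / 3 ^ (i + 1))"

lemma summable_ternary:
  fixes c :: "nat \<Rightarrow> real"
  assumes "\<And>i. \<bar>c i\<bar> \<le> D"
  shows "summable (\<lambda>i. c i / 3 ^ (i + 1))"
proof (rule summable_comparison_test')
  show "summable (\<lambda>i. D / 3 * (1/3) ^ i)"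
    by (intro summable_mult summable_geometric) auto
  show "norm (c i / 3 ^ (i + 1)) \<le> D / 3 * (1/3) ^ i" for i
    using assms[of i] by (simp add: power_divide divide_right_mono)
qed

lemma ternary_sum_diff:
  assumes "\<And>i. \<bar>c i\<bar> \<le> D" and "\<And>i. \<bar>d i\<bar> \<le> D"
  shows "ternary_sum c - ternary_sum d = ternary_sum (\<lambda>i. c i - d i)"
  unfolding ternary_sum_def diff_divide_distrib
  using assms by (intro suminf_diff summable_ternary)

lemma ternary_sum_add:
  assumes "\<And>i. \<bar>c i\<bar> \<le> D" and "\<And>i. \<bar>d i\<bar> \<le> D"
  shows "ternary_sum c + ternary_sum d = ternary_sum (\<lambda>i. c i + d i)"
  unfolding ternary_sum_def add_divide_distrib
  using assms by (intro suminf_add summable_ternary)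

lemma abs_ternary_sum_le:
  assumes "\<And>i. \<bar>c i\<bar> \<le> D"
  shows "\<bar>ternary_sum c\<bar> \<le> D / 2"
proof -
  have geom: "(\<lambda>i. D / 3 * (1/3) ^ i) sums (D / 2)"
    using sums_mult[OF geometric_sums[of "1/3::real"], of "D/3"] by simp
  have abs_summable: "summable (\<lambda>i. \<bar>c i / 3 ^ (i + 1)\<bar>)"
    using summable_ternary[of "\<lambda>i. \<bar>c i\<bar>" D] assms by (simp add: abs_divide)
  have "\<bar>ternary_sum c\<bar> \<le> (\<Sum>i. \<bar>c i / 3 ^ (i + 1)\<bar>)"
    unfolding ternary_sum_def using summable_norm[OF abs_summable[folded real_norm_def]] by simp
  also have "\<dots> \<le> (\<Sum>i. D / 3 * (1/3) ^ i)"
    using abs_summable geom assms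
    by (intro suminf_le) (auto simp: sums_iff abs_divide power_divide divide_right_mono)
  finally show ?thesis
    using geom by (simp add: sums_iff)
qed

lemma ternary_sum_shift:
  assumes "\<And>i. \<bar>c i\<bar> \<le> D" and "\<And>i. i < L \<Longrightarrow> c i = 0"
  shows "ternary_sum c = ternary_sum (\<lambda>i. c (i + L)) / 3 ^ L"
proof -
  have "ternary_sum c = (\<Sum>i. c (i + L) / 3 ^ (i + L + 1))"
    unfolding ternary_sum_def
    using suminf_split_initial_segment[OF summable_ternary[OF assms(1)], where k=L] assms(2)
    by simp
  also have "\<dots> = (\<Sum>i. c (i + L) / 3 ^ (i + 1) / 3 ^ L)"
    by (simp add: power_add mult.assoc)
  also have "\<dots> = ternary_sum (\<lambda>i. c (i + L)) / 3 ^ L"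
    unfolding ternary_sum_def using assms(1) by (intro suminf_divide summable_ternary)
  finally show ?thesis .
qed

lemma ternary_sum_tail_le:
  assumes "\<And>i. \<bar>c i\<bar> \<le> D" and "\<And>i. i < L \<Longrightarrow> c i = 0"
  shows "\<bar>ternary_sum c\<bar> \<le> D / (2 * 3 ^ L)"
proof -
  have "\<bar>ternary_sum (\<lambda>i. c (i + L))\<bar> \<le> D / 2"
    using assms(1) by (intro abs_ternary_sum_le)
  then have "\<bar>ternary_sum (\<lambda>i. c (i + L))\<bar> / 3 ^ L \<le> D / 2 / 3 ^ L"
    by (rule divide_right_mono) simp
  moreover have "\<bar>ternary_sum c\<bar> = \<bar>ternary_sum (\<lambda>i. c (i + L))\<bar> / 3 ^ L"
    using ternary_sum_shift[of c D L, OF assms] by (simp add: abs_divide)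
  ultimately show ?thesis
    by simp
qed

lemma ternary_sum_split_head:
  assumes "\<And>i. \<bar>c i\<bar> \<le> D"
  shows "ternary_sum c = c 0 / 3 + ternary_sum (\<lambda>i. c (Suc i)) / 3"
proof -
  have "ternary_sum (\<lambda>i. c (Suc i)) / 3 = (\<Sum>i. c (Suc i) / 3 ^ (i + 1) / 3)"
    unfolding ternary_sum_def using assms by (intro suminf_divide [symmetric] summable_ternary)
  also have "\<dots> = (\<Sum>i. c (Suc i) / 3 ^ (Suc i + 1))"
    by simp
  also have "\<dots> = ternary_sum c - c 0 / 3"
    unfolding ternary_sum_def using suminf_split_head[OF summable_ternary[OF assms]] by simp
  finally show ?thesis by linarith
qed

lemma abs_ternary_sum_ge:
  assumes "\<And>i. \<bar>c i\<bar> \<le> D"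
  shows "\<bar>c 0\<bar> / 3 - D / 6 \<le> \<bar>ternary_sum c\<bar>"
proof -
  have "\<bar>ternary_sum (\<lambda>i. c (Suc i))\<bar> \<le> D / 2"
    using assms by (intro abs_ternary_sum_le)
  then show ?thesis
    unfolding ternary_sum_split_head[of c D, OF assms] by linarith
qed

text \<open>Digits in {0, 1, 2} alone do not separate expansions (0.0222... = 0.1 in base 3);
  the vanishing tail does.\<close>

lemma ternary_sum_finite_ge_head:
  assumes bound: "\<And>i. \<bar>e i\<bar> \<le> 2" and zero: "\<And>i. Suc M \<le> i \<Longrightarrow> e i = 0"
    and lead: "1 \<le> \<bar>e 0\<bar>"
  shows "1 / 3 ^ Suc M \<le> \<bar>ternary_sum e\<bar>"
proof -
  have "ternary_sum e = (\<Sum>i<Suc M. e i / 3 ^ (i + 1))"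
    unfolding ternary_sum_def using zero by (intro suminf_finite) auto
  also have "\<dots> = e 0 / 3 + (\<Sum>i<M. e (Suc i) / 3 ^ (Suc i + 1))"
    unfolding sum.lessThan_Suc_shift by simp
  finally have split: "ternary_sum e = e 0 / 3 + (\<Sum>i<M. e (Suc i) / 3 ^ (Suc i + 1))" .
  have "\<bar>\<Sum>i<M. e (Suc i) / 3 ^ (Suc i + 1)\<bar> \<le> (\<Sum>i<M. 2 / 3 ^ (Suc i + 1))"
    using bound by (intro sum_abs[THEN order_trans] sum_mono) (simp add: abs_divide divide_right_mono)
  also have "\<dots> = (\<Sum>i<M. (- 1 / 3 ^ (Suc i + 1)) - (- 1 / 3 ^ (i + 1)))"
    by (intro sum.cong) (auto simp: field_simps)
  also have "\<dots> = 1 / 3 - 1 / 3 ^ Suc M"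
    by (subst sum_lessThan_telescope) simp
  finally have "\<bar>\<Sum>i<M. e (Suc i) / 3 ^ (Suc i + 1)\<bar> \<le> 1 / 3 - 1 / 3 ^ Suc M" .
  moreover have "1 / 3 \<le> \<bar>e 0 / 3\<bar>"
    using lead by simp
  ultimately show ?thesis
    unfolding split by linarith
qed

lemma ternary_sum_finite_ge:
  assumes bound: "\<And>i. \<bar>e i\<bar> \<le> 2" and below: "\<And>i. i < p \<Longrightarrow> e i = 0"
    and above: "\<And>i. L \<le> i \<Longrightarrow> e i = 0" and "1 \<le> \<bar>e p\<bar>" and "p < L"
  shows "1 / 3 ^ L \<le> \<bar>ternary_sum e\<bar>"
proof -
  obtain M where M: "L = p + Suc M"
    using \<open>p < L\<close> less_iff_Suc_add by (auto simp: add.commute)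
  have "1 / 3 ^ Suc M \<le> \<bar>ternary_sum (\<lambda>i. e (i + p))\<bar>"
    using assms by (intro ternary_sum_finite_ge_head) (auto simp: M)
  then have "1 / 3 ^ Suc M / 3 ^ p \<le> \<bar>ternary_sum (\<lambda>i. e (i + p))\<bar> / 3 ^ p"
    by (rule divide_right_mono) simp
  then show ?thesis
    using ternary_sum_shift[of e 2 p, OF bound below] by (simp add: M abs_divide power_add mult_ac)
qed

lemma first_difference:
  fixes i :: nat
  assumes "f i \<noteq> g i"
  obtains p where "p \<le> i" "f p \<noteq> g p" "\<And>j. j < p \<Longrightarrow> f j = g j"
  using assms LeastI[of "\<lambda>i. f i \<noteq> g i"] Least_le[of "\<lambda>i. f i \<noteq> g i"]
    not_less_Least[of _ "\<lambda>i. f i \<noteq> g i"]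
  by blast

lemma abs_digit_le: "\<bar>digit b\<bar> \<le> 1"
  by (simp add: digit_def)

lemma cantor_pt_diff:
  "cantor_pt a - cantor_pt b = ternary_sum (\<lambda>i. digit (a i) - digit (b i))"
  unfolding cantor_pt_def ternary_sum_def[symmetric] by (rule ternary_sum_diff[where D=1]) (rule abs_digit_le)+

lemma abs_digit_diff_le: "\<bar>digit s - digit t\<bar> \<le> 1"
  by (simp add: digit_def)

lemma cantor_pt_close:
  assumes "\<And>i. i < L \<Longrightarrow> a i = b i"
  shows "\<bar>cantor_pt a - cantor_pt b\<bar> \<le> 1 / (2 * 3 ^ L)"
  unfolding cantor_pt_diff using abs_digit_diff_le assms by (intro ternary_sum_tail_le) auto

lemma cantor_pt_far:
  assumes "i < L" and "a i \<noteq> b i"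
  shows "1 / (2 * 3 ^ L) \<le> \<bar>cantor_pt a - cantor_pt b\<bar>"
proof -
  obtain p where p: "p \<le> i" "a p \<noteq> b p" and agree: "\<And>j. j < p \<Longrightarrow> a j = b j"
    using first_difference[of a i b] assms(2) by blast
  define e where "e = (\<lambda>j. digit (a j) - digit (b j))"
  have e_bound: "\<And>j. \<bar>e j\<bar> \<le> 1" and e_zero: "\<And>j. j < p \<Longrightarrow> e j = 0"
    using agree by (simp_all add: e_def abs_digit_diff_le)
  have "\<bar>e p\<bar> = 1"
    using p(2) by (cases "a p") (auto simp: e_def digit_def)
  then have "1 / 3 - 1 / 6 \<le> \<bar>ternary_sum (\<lambda>j. e (j + p))\<bar>"
    using abs_ternary_sum_ge[of "\<lambda>j. e (j + p)" 1] e_bound by simp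
  then have "1 / 6 / 3 ^ p \<le> \<bar>ternary_sum (\<lambda>j. e (j + p))\<bar> / 3 ^ p"
    by (intro divide_right_mono) auto
  also have "\<dots> = \<bar>ternary_sum e\<bar>"
    by (simp add: ternary_sum_shift[of e 1 p, OF e_bound e_zero] abs_divide)
  also have "\<dots> = \<bar>cantor_pt a - cantor_pt b\<bar>"
    by (simp add: cantor_pt_diff e_def)
  finally have "1 / (2 * 3 ^ (p + 1)) \<le> \<bar>cantor_pt a - cantor_pt b\<bar>"
    by simp
  moreover have "(3::real) ^ (p + 1) \<le> 3 ^ L"
    using p(1) assms(1) by (intro power_increasing) auto
  then have "1 / (2 * 3 ^ L) \<le> (1::real) / (2 * 3 ^ (p + 1))"
    by (intro divide_left_mono) auto
  ultimately show ?thesis by linarith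
qed

lemma inj_cantor_pt: "inj cantor_pt"
proof (rule injI, rule ccontr)
  fix a b assume "cantor_pt a = cantor_pt b" and "a \<noteq> b"
  then obtain i where "a i \<noteq> b i" by auto
  then have "1 / (2 * 3 ^ Suc i) \<le> \<bar>cantor_pt a - cantor_pt b\<bar>"
    by (intro cantor_pt_far) auto
  moreover have "0 < 1 / (2 * 3 ^ Suc i :: real)"
    by simp
  ultimately show False
    using \<open>cantor_pt a = cantor_pt b\<close> by linarith
qed

lemma the_cantor_pt_eq: "(THE y. \<exists>a'. cantor_pt a = cantor_pt a' \<and> y = F a') = F a"
  by (rule the_equality) (auto dest: injD[OF inj_cantor_pt])

lemma cantor_f_cantor_pt: "cantor_f (cantor_pt a) = cantor_pt (\<lambda>j. a (2 * j))"
  unfolding cantor_f_def using the_cantor_pt_eq[of a "\<lambda>a'. cantor_pt (\<lambda>j. a' (2 * j))"]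
  by (simp add: cantor_pt_def)

lemma cantor_g_cantor_pt: "cantor_g (cantor_pt a) = cantor_pt (\<lambda>j. a (2 * j + 1))"
  unfolding cantor_g_def using the_cantor_pt_eq[of a "\<lambda>a'. cantor_pt (\<lambda>j. a' (2 * j + 1))"]
  by (simp add: cantor_pt_def)

lemma continuous_on_cantorK_reindex:
  assumes h: "\<And>a. h (cantor_pt a) = cantor_pt (\<lambda>j. a (\<sigma> j))"
  shows "continuous_on cantorK h"
  unfolding continuous_on_iff cantorK_def
proof (intro ballI allI impI)
  fix x and e :: real
  assume "x \<in> range cantor_pt" and "0 < e"
  then obtain a where x: "x = cantor_pt a" by auto
  obtain M where "(1/3) ^ M < e"
    using real_arch_pow_inv[OF \<open>0 < e\<close>, of "1/3"] by auto
  moreover have "1 / (2 * 3 ^ M) < (1/3::real) ^ M"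
    by (simp add: power_divide field_simps)
  ultimately have M: "1 / (2 * 3 ^ M) < e"
    by linarith
  obtain N where N: "\<sigma> ` {..<M} \<subseteq> {..<N}"
    using finite_nat_bounded[of "\<sigma> ` {..<M}"] by blast
  show "\<exists>d>0. \<forall>x'\<in>range cantor_pt. dist x' x < d \<longrightarrow> dist (h x') (h x) < e"
  proof (intro exI[of _ "1 / (2 * 3 ^ N)"] conjI ballI impI)
    fix x' assume "x' \<in> range cantor_pt" and "dist x' x < 1 / (2 * 3 ^ N)"
    then obtain b where x': "x' = cantor_pt b"
      and close: "\<bar>cantor_pt b - cantor_pt a\<bar> < 1 / (2 * 3 ^ N)"
      using x by (auto simp: dist_real_def)
    have "b i = a i" if "i < N" for i
      using cantor_pt_far[OF that, of b a] close by force
    then have "\<bar>cantor_pt (\<lambda>j. b (\<sigma> j)) - cantor_pt (\<lambda>j. a (\<sigma> j))\<bar> \<le> 1 / (2 * 3 ^ M)"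
      using N by (intro cantor_pt_close) auto
    then show "dist (h x') (h x) < e"
      using M by (simp add: x x' h dist_real_def)
  qed simp
qed

definition separated_subsets :: "'a::metric_space set \<Rightarrow> nat \<Rightarrow> 'a set set" where
  "separated_subsets X n =
     {S. finite S \<and> S \<subseteq> X \<and> (\<forall>x\<in>S. \<forall>y\<in>S. x \<noteq> y \<longrightarrow> dist x y > (1/2) ^ n)}"

lemma sep_number_eq_Sup: "sep_number X n = Sup (card ` separated_subsets X n)"
  unfolding sep_number_def separated_subsets_def by (rule arg_cong[of _ _ Sup]) (auto simp: image_def)

lemma sep_number_le:
  assumes "\<And>S. S \<in> separated_subsets X n \<Longrightarrow> card S \<le> M"
  shows "sep_number X n \<le> M"
proof -
  have "{} \<in> separated_subsets X n"
    by (simp add: separated_subsets_def)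
  then show ?thesis
    unfolding sep_number_eq_Sup using assms by (intro cSup_least) auto
qed

lemma card_le_sep_number:
  assumes "\<And>S. S \<in> separated_subsets X n \<Longrightarrow> card S \<le> M" and "S \<in> separated_subsets X n"
  shows "card S \<le> sep_number X n"
  unfolding sep_number_eq_Sup using assms by (intro cSup_upper bdd_aboveI[of _ M]) auto

lemma card_separated_le_card_image:
  assumes "S \<in> separated_subsets (Q ` A) n" and "finite (\<psi> ` A)"
    and "\<And>a b. a \<in> A \<Longrightarrow> b \<in> A \<Longrightarrow> \<psi> a = \<psi> b \<Longrightarrow> dist (Q a) (Q b) \<le> (1/2) ^ n"
  shows "card S \<le> card (\<psi> ` A)"
proof -
  define \<rho> where "\<rho> = \<psi> \<circ> inv_into A Q"
  have S: "S \<subseteq> Q ` A" "\<forall>x\<in>S. \<forall>y\<in>S. x \<noteq> y \<longrightarrow> dist x y > (1/2) ^ n"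
    using assms(1) by (auto simp: separated_subsets_def)
  have "inj_on \<rho> S"
  proof (rule inj_onI, rule ccontr)
    fix x y assume "x \<in> S" "y \<in> S" "\<rho> x = \<rho> y" "x \<noteq> y"
    moreover have "inv_into A Q x \<in> A" "inv_into A Q y \<in> A"
      "Q (inv_into A Q x) = x" "Q (inv_into A Q y) = y"
      using S(1) \<open>x \<in> S\<close> \<open>y \<in> S\<close> by (auto intro: inv_into_into f_inv_into_f)
    ultimately show False
      using assms(3)[of "inv_into A Q x" "inv_into A Q y"] S(2) by (force simp: \<rho>_def)
  qed
  then have "card S = card (\<rho> ` S)"
    by (rule card_image[symmetric])
  also have "\<dots> \<le> card (\<psi> ` A)"
    using S(1) assms(2) by (intro card_mono) (auto simp: \<rho>_def inv_into_into)
  finally show ?thesis .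
qed

definition pair_digits :: "(bool \<Rightarrow> bool \<Rightarrow> nat) \<Rightarrow> (nat \<Rightarrow> bool) \<Rightarrow> nat \<Rightarrow> nat" where
  "pair_digits \<phi> a j = \<phi> (a (2 * j)) (a (2 * j + 1))"

definition graph_point :: "(bool \<Rightarrow> bool \<Rightarrow> nat) \<Rightarrow> (nat \<Rightarrow> bool) \<Rightarrow> real \<times> real" where
  "graph_point \<phi> a = (cantor_pt a, ternary_sum (\<lambda>j. real (pair_digits \<phi> a j)))"

lemma graph_on_cantorK_eq:
  assumes "\<And>a. h (cantor_pt a) = ternary_sum (\<lambda>j. real (pair_digits \<phi> a j))"
  shows "graph_on cantorK h = range (graph_point \<phi>)"
  unfolding graph_on_def cantorK_def graph_point_def using assms by auto

definition scale_code ::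
    "(bool \<Rightarrow> bool \<Rightarrow> nat) \<Rightarrow> nat \<Rightarrow> (nat \<Rightarrow> bool) \<Rightarrow> (nat \<Rightarrow> bool) \<times> (nat \<Rightarrow> nat)" where
  "scale_code \<phi> k a = (restrict a {..<2 * k}, restrict (\<lambda>j. pair_digits \<phi> a (k + j)) {..<k})"

definition code_space :: "(bool \<Rightarrow> bool \<Rightarrow> nat) \<Rightarrow> nat \<Rightarrow> ((nat \<Rightarrow> bool) \<times> (nat \<Rightarrow> nat)) set" where
  "code_space \<phi> k = ({..<2 * k} \<rightarrow>\<^sub>E UNIV) \<times> ({..<k} \<rightarrow>\<^sub>E range (case_prod \<phi>))"

lemma scale_code_in_code_space: "scale_code \<phi> k a \<in> code_space \<phi> k"
  by (auto simp: scale_code_def code_space_def pair_digits_def)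

lemma card_code_space: "card (code_space \<phi> k) = (4 * card (range (case_prod \<phi>))) ^ k"
proof -
  have "card (code_space \<phi> k) = 2 ^ (2 * k) * card (range (case_prod \<phi>)) ^ k"
    by (simp add: code_space_def card_cartesian_product card_PiE)
  then show ?thesis
    by (simp add: power_mult power_mult_distrib)
qed

lemma finite_code_space: "finite (code_space \<phi> k)"
  by (simp add: code_space_def finite_PiE)

lemma pair_digits_le:
  assumes "\<And>s t. \<phi> s t \<le> 2"
  shows "real (pair_digits \<phi> a j) \<le> 2"
  using assms by (simp add: pair_digits_def)

lemma abs_pair_digits_diff_le:
  assumes "\<And>s t. \<phi> s t \<le> 2"
  shows "\<bar>real (pair_digits \<phi> a j) - real (pair_digits \<phi> b j)\<bar> \<le> 2"
  using pair_digits_le[of \<phi> a j, OF assms] pair_digits_le[of \<phi> b j, OF assms] by linarith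

lemma dist_Pair_le_add: "dist (a, b) (c, d) \<le> dist a c + dist b d"
  unfolding dist_Pair_Pair by (intro sqrt_sum_squares_le_sum) auto

lemma scale_code_eq_iff:
  "scale_code \<phi> k a = scale_code \<phi> k b \<longleftrightarrow>
     (\<forall>i<2 * k. a i = b i) \<and> (\<forall>j<k. pair_digits \<phi> a (k + j) = pair_digits \<phi> b (k + j))"
  unfolding scale_code_def by (auto simp: restrict_def fun_eq_iff)

lemma dist_graph_point_le:
  assumes bound: "\<And>s t. \<phi> s t \<le> 2" and "scale_code \<phi> k a = scale_code \<phi> k b"
  shows "dist (graph_point \<phi> a) (graph_point \<phi> b) \<le> 3 / (2 * 9 ^ k)"
proof -
  have digits: "\<And>i. i < 2 * k \<Longrightarrow> a i = b i"
    and code: "\<And>j. j < k \<Longrightarrow> pair_digits \<phi> a (k + j) = pair_digits \<phi> b (k + j)"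
    using assms(2) by (auto simp: scale_code_eq_iff)
  have pairs: "pair_digits \<phi> a j = pair_digits \<phi> b j" if "j < 2 * k" for j
  proof (cases "j < k")
    case True
    then show ?thesis using digits by (simp add: pair_digits_def)
  next
    case False
    then show ?thesis using code[of "j - k"] that by simp
  qed
  have nine: "(3::real) ^ (2 * k) = 9 ^ k"
    by (simp add: power_mult)
  have "dist (cantor_pt a) (cantor_pt b) \<le> 1 / (2 * 9 ^ k)"
    using cantor_pt_close[of "2 * k" a b] digits by (simp add: dist_real_def nine)
  moreover have "\<bar>ternary_sum (\<lambda>j. real (pair_digits \<phi> a j) - real (pair_digits \<phi> b j))\<bar> \<le> 2 / (2 * 9 ^ k)"
    using abs_pair_digits_diff_le[of \<phi>, OF bound] pairs
    by (subst nine[symmetric], intro ternary_sum_tail_le) auto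
  then have "dist (ternary_sum (\<lambda>j. real (pair_digits \<phi> a j))) (ternary_sum (\<lambda>j. real (pair_digits \<phi> b j)))
      \<le> 2 / (2 * 9 ^ k)"
    using pair_digits_le[of \<phi>, OF bound]
    by (subst dist_real_def, subst ternary_sum_diff[where D=2]) auto
  moreover have "1 / (2 * 9 ^ k) + 2 / (2 * 9 ^ k) = (3::real) / (2 * 9 ^ k)"
    by (simp add: add_divide_distrib [symmetric])
  ultimately show ?thesis
    unfolding graph_point_def
    using dist_Pair_le_add[of "cantor_pt a" "ternary_sum (\<lambda>j. real (pair_digits \<phi> a j))"
        "cantor_pt b" "ternary_sum (\<lambda>j. real (pair_digits \<phi> b j))"]
    by linarith
qed

lemma pair_expansion_far:
  assumes bound: "\<And>s t. \<phi> s t \<le> 2" and tail: "\<And>i. 4 * k \<le> i \<Longrightarrow> a i = b i"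
    and "j < 2 * k" and "pair_digits \<phi> a j \<noteq> pair_digits \<phi> b j"
  shows "1 / 9 ^ k \<le> \<bar>ternary_sum (\<lambda>i. real (pair_digits \<phi> a i)) - ternary_sum (\<lambda>i. real (pair_digits \<phi> b i))\<bar>"
proof -
  obtain p where p: "p \<le> j" "pair_digits \<phi> a p \<noteq> pair_digits \<phi> b p"
    and agree: "\<And>i. i < p \<Longrightarrow> pair_digits \<phi> a i = pair_digits \<phi> b i"
    using first_difference[of "pair_digits \<phi> a" j "pair_digits \<phi> b"] assms(4) by blast
  have "1 / 3 ^ (2 * k) \<le> \<bar>ternary_sum (\<lambda>i. real (pair_digits \<phi> a i) - real (pair_digits \<phi> b i))\<bar>"
  proof (rule ternary_sum_finite_ge)
    show "1 \<le> \<bar>real (pair_digits \<phi> a p) - real (pair_digits \<phi> b p)\<bar>"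
      using p(2) by linarith
    show "real (pair_digits \<phi> a i) - real (pair_digits \<phi> b i) = 0" if "2 * k \<le> i" for i
      using tail that by (simp add: pair_digits_def)
  qed (use abs_pair_digits_diff_le[of \<phi>, OF bound] agree p(1) assms(3) in auto)
  then show ?thesis
    using pair_digits_le[of \<phi>, OF bound] by (subst ternary_sum_diff[where D=2]) (auto simp: power_mult)
qed

lemma dist_graph_point_ge:
  assumes bound: "\<And>s t. \<phi> s t \<le> 2" and tail: "\<And>i. 4 * k \<le> i \<Longrightarrow> a i = b i"
    and "scale_code \<phi> k a \<noteq> scale_code \<phi> k b"
  shows "1 / (2 * 9 ^ k) \<le> dist (graph_point \<phi> a) (graph_point \<phi> b)"
proof -
  consider (digit) i where "i < 2 * k" "a i \<noteq> b i"
    | (pair) j where "j < k" "pair_digits \<phi> a (k + j) \<noteq> pair_digits \<phi> b (k + j)"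
    using assms(3) unfolding scale_code_eq_iff by blast
  then show ?thesis
  proof cases
    case digit
    then have "1 / (2 * 9 ^ k) \<le> dist (cantor_pt a) (cantor_pt b)"
      using cantor_pt_far[of i "2 * k" a b] by (simp add: dist_real_def power_mult)
    then show ?thesis
      using dist_fst_le[of "graph_point \<phi> a" "graph_point \<phi> b"] by (simp add: graph_point_def)
  next
    case pair
    then have "1 / 9 ^ k \<le> dist (ternary_sum (\<lambda>i. real (pair_digits \<phi> a i)))
        (ternary_sum (\<lambda>i. real (pair_digits \<phi> b i)))"
      unfolding dist_real_def by (intro pair_expansion_far[OF bound tail]) auto
    moreover have "1 / (2 * 9 ^ k) \<le> (1::real) / 9 ^ k"
      by (simp add: field_simps)
    ultimately show ?thesis
      using dist_snd_le[of "graph_point \<phi> a" "graph_point \<phi> b"] by (simp add: graph_point_def)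
  qed
qed

definition code_witness ::
    "(bool \<Rightarrow> bool \<Rightarrow> nat) \<Rightarrow> nat \<Rightarrow> (nat \<Rightarrow> bool) \<times> (nat \<Rightarrow> nat) \<Rightarrow> nat \<Rightarrow> bool" where
  "code_witness \<phi> k x i =
     (if i < 2 * k then fst x i
      else if i < 4 * k then (if even i then fst else snd) (inv (case_prod \<phi>) (snd x (i div 2 - k)))
      else False)"

lemma scale_code_code_witness:
  assumes "x \<in> code_space \<phi> k"
  shows "scale_code \<phi> k (code_witness \<phi> k x) = x"
proof -
  obtain u v where x: "x = (u, v)" and u: "u \<in> {..<2 * k} \<rightarrow>\<^sub>E UNIV"
    and v: "v \<in> {..<k} \<rightarrow>\<^sub>E range (case_prod \<phi>)"
    using assms by (auto simp: code_space_def)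
  have "restrict (code_witness \<phi> k x) {..<2 * k} = restrict u {..<2 * k}"
    by (intro restrict_ext) (simp add: code_witness_def x)
  moreover have "pair_digits \<phi> (code_witness \<phi> k x) (k + j) = v j" if "j < k" for j
  proof -
    have "code_witness \<phi> k x (2 * (k + j)) = fst (inv (case_prod \<phi>) (v j))"
      and "code_witness \<phi> k x (2 * (k + j) + 1) = snd (inv (case_prod \<phi>) (v j))"
      using that by (simp_all add: code_witness_def x)
    then have "pair_digits \<phi> (code_witness \<phi> k x) (k + j) = case_prod \<phi> (inv (case_prod \<phi>) (v j))"
      by (simp add: pair_digits_def case_prod_beta)
    also have "\<dots> = v j"
      using PiE_mem[OF v, of j] that by (intro f_inv_into_f) simp
    finally show ?thesis .
  qed
  then have "restrict (\<lambda>j. pair_digits \<phi> (code_witness \<phi> k x) (k + j)) {..<k} = restrict v {..<k}"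
    by (intro restrict_ext) simp
  ultimately show ?thesis
    using u v by (simp add: scale_code_def x)
qed

lemma inj_graph_point: "inj (graph_point \<phi>)"
  using inj_cantor_pt by (auto simp: inj_def graph_point_def)

lemma card_graph_separated_le:
  assumes bound: "\<And>s t. \<phi> s t \<le> 2" and scale: "3 * 2 ^ n \<le> 2 * (9::real) ^ k"
    and "S \<in> separated_subsets (range (graph_point \<phi>)) n"
  shows "card S \<le> (4 * card (range (case_prod \<phi>))) ^ k"
proof -
  have "3 / (2 * 9 ^ k) \<le> ((1::real) / 2) ^ n"
    using scale by (simp add: power_divide field_simps)
  then have "dist (graph_point \<phi> a) (graph_point \<phi> b) \<le> (1/2) ^ n"
    if "scale_code \<phi> k a = scale_code \<phi> k b" for a b
    using dist_graph_point_le[of \<phi> k a b, OF bound that] by linarith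
  then have "card S \<le> card (range (scale_code \<phi> k))"
    using assms(3)
    by (intro card_separated_le_card_image)
      (auto intro: finite_subset[OF _ finite_code_space] scale_code_in_code_space)
  also have "\<dots> \<le> card (code_space \<phi> k)"
    using scale_code_in_code_space by (intro card_mono finite_code_space) auto
  finally show ?thesis
    by (simp add: card_code_space)
qed

lemma sep_number_graph_le:
  assumes "\<And>s t. \<phi> s t \<le> 2" and "3 * 2 ^ n \<le> 2 * (9::real) ^ k"
  shows "sep_number (range (graph_point \<phi>)) n \<le> (4 * card (range (case_prod \<phi>))) ^ k"
  using card_graph_separated_le[of \<phi> n k, OF assms] by (rule sep_number_le)

lemma sep_number_graph_ge:
  assumes bound: "\<And>s t. \<phi> s t \<le> 2" and scale: "2 * 9 ^ k < (2::real) ^ n"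
  shows "(4 * card (range (case_prod \<phi>))) ^ k \<le> sep_number (range (graph_point \<phi>)) n"
proof -
  let ?S = "graph_point \<phi> ` code_witness \<phi> k ` code_space \<phi> k"
  have "inj_on (code_witness \<phi> k) (code_space \<phi> k)"
    by (rule inj_on_inverseI[where g="scale_code \<phi> k"]) (rule scale_code_code_witness)
  then have "card ?S = card (code_space \<phi> k)"
    using inj_on_subset[OF inj_graph_point subset_UNIV] by (simp add: card_image)
  then have card_S: "card ?S = (4 * card (range (case_prod \<phi>))) ^ k"
    by (simp add: card_code_space)
  have separated_S: "?S \<in> separated_subsets (range (graph_point \<phi>)) n"
    unfolding separated_subsets_def
  proof (intro CollectI conjI ballI impI)
    show "finite ?S" "?S \<subseteq> range (graph_point \<phi>)"
      using finite_code_space by auto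
    fix p q assume "p \<in> ?S" "q \<in> ?S" "p \<noteq> q"
    then obtain x y where xy: "x \<in> code_space \<phi> k" "y \<in> code_space \<phi> k" "x \<noteq> y"
      and pq: "p = graph_point \<phi> (code_witness \<phi> k x)" "q = graph_point \<phi> (code_witness \<phi> k y)"
      by blast
    have "((1::real) / 2) ^ n < 1 / (2 * 9 ^ k)"
      using scale by (simp add: power_divide field_simps)
    also have "\<dots> \<le> dist p q"
      unfolding pq using xy
      by (intro dist_graph_point_ge[of \<phi>, OF bound]) (auto simp: code_witness_def scale_code_code_witness)
    finally show "(1/2) ^ n < dist p q" .
  qed
  have scale_upper: "3 * 2 ^ n \<le> 2 * (9::real) ^ (n + 1)"
  proof -
    have "(2::real) ^ n \<le> 9 ^ n"
      by (rule power_mono) auto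
    moreover have "(0::real) \<le> 9 ^ n" "(9::real) ^ (n + 1) = 9 * 9 ^ n"
      by simp_all
    ultimately show ?thesis
      by linarith
  qed
  show ?thesis
    unfolding card_S[symmetric]
    using card_graph_separated_le[of \<phi> n "n + 1", OF bound scale_upper] separated_S
    by (rule card_le_sep_number)
qed

lemma ln_bounds_of_scale_bounds:
  fixes x q :: nat
  assumes "0 < q" and scale: "ln 9 \<le> real n * ln 2"
    and upper: "\<And>k. 3 * 2 ^ n \<le> 2 * (9::real) ^ k \<Longrightarrow> x \<le> q ^ k"
    and lower: "\<And>k. 2 * 9 ^ k < (2::real) ^ n \<Longrightarrow> q ^ k \<le> x"
  shows "\<bar>ln (real x) - real n * ln 2 / ln 9 * ln q\<bar> \<le> 2 * ln q"
proof -
  define t where "t = real n * ln 2 / ln 9"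
  have "1 \<le> t"
    using scale by (simp add: t_def field_simps)
  have nine_powr: "9 powr t = 2 ^ n"
    by (simp add: t_def powr_def powr_realpow[symmetric])
  have lnq: "0 \<le> ln (real q)"
    using \<open>0 < q\<close> by simp
  define ku where "ku = nat \<lceil>t\<rceil> + 1"
  have ku: "t + 1 \<le> real ku" "real ku \<le> t + 2"
    using \<open>1 \<le> t\<close> by (simp_all add: ku_def) linarith+
  have "9 * 2 ^ n = (9::real) powr (t + 1)"
    by (simp add: powr_add nine_powr)
  also have "\<dots> \<le> 9 ^ ku"
    using ku(1) by (simp add: powr_realpow[symmetric])
  finally have "x \<le> q ^ ku"
    using zero_le_power[of "2::real" n] by (intro upper) linarith
  define kl where "kl = nat \<lfloor>t\<rfloor> - 1"
  have kl: "t - 2 \<le> real kl" "real kl \<le> t - 1"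
    using \<open>1 \<le> t\<close> by (simp_all add: kl_def of_nat_diff) linarith+
  have "9 * 9 ^ kl = (9::real) powr (real kl + 1)"
    by (simp add: powr_add powr_realpow)
  also have "\<dots> \<le> 9 powr t"
    using kl(2) by (intro powr_mono) auto
  finally have "9 * 9 ^ kl \<le> (2::real) ^ n"
    by (simp only: nine_powr)
  then have "q ^ kl \<le> x"
    using zero_less_power[of "9::real" kl] by (intro lower) linarith
  then have "0 < x"
    using \<open>0 < q\<close> by (metis le_less_trans zero_less_power not_le)
  have "ln (real x) \<le> real ku * ln q"
    using \<open>x \<le> q ^ ku\<close> \<open>0 < x\<close> \<open>0 < q\<close> by (simp add: ln_realpow[symmetric] flip: of_nat_power)
  also have "\<dots> \<le> (t + 2) * ln q"
    using ku(2) lnq by (intro mult_right_mono) auto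
  finally have "ln (real x) \<le> (t + 2) * ln q" .
  moreover have "(t - 2) * ln q \<le> real kl * ln q"
    using kl(1) lnq by (intro mult_right_mono) auto
  moreover have "real kl * ln q \<le> ln (real x)"
    using \<open>q ^ kl \<le> x\<close> \<open>0 < x\<close> \<open>0 < q\<close> by (simp add: ln_realpow[symmetric] flip: of_nat_power)
  ultimately show ?thesis
    unfolding t_def[symmetric] by (simp add: abs_le_iff algebra_simps)
qed

lemma limsup_ln_ratio_eq:
  fixes N :: "nat \<Rightarrow> nat" and q :: nat
  assumes "0 < q"
    and upper: "\<And>n k. 3 * 2 ^ n \<le> 2 * (9::real) ^ k \<Longrightarrow> N n \<le> q ^ k"
    and lower: "\<And>n k. 2 * 9 ^ k < (2::real) ^ n \<Longrightarrow> q ^ k \<le> N n"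
  shows "limsup (\<lambda>n. ereal (ln (real (N n)) / (real n * ln 2))) = ereal (ln q / ln 9)"
proof -
  define r where "r n = ln (real (N n)) / (real n * ln 2)" for n
  have "\<forall>\<^sub>F n in sequentially. ln 9 \<le> real n * ln 2 \<and> 0 < n"
    using eventually_ge_at_top[of "nat \<lceil>ln (9::real) / ln 2\<rceil>"] eventually_gt_at_top[of 0]
  proof eventually_elim
    case (elim n)
    then have "ln 9 / ln 2 \<le> real n"
      by (simp add: nat_le_iff ceiling_le_iff)
    with elim show ?case
      by (simp add: pos_divide_le_eq)
  qed
  then have "\<forall>\<^sub>F n in sequentially. norm (r n - ln q / ln 9) \<le> (2 * ln q / ln 2) / real n"
  proof eventually_elim
    case (elim n)
    have "\<bar>ln (real (N n)) - real n * ln 2 / ln 9 * ln q\<bar> \<le> 2 * ln q"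
      using elim ln_bounds_of_scale_bounds[of q n "N n", OF \<open>0 < q\<close> _ upper lower] by blast
    then have "\<bar>ln (real (N n)) - real n * ln 2 / ln 9 * ln q\<bar> / (real n * ln 2) \<le> 2 * ln q / (real n * ln 2)"
      by (rule divide_right_mono) simp
    moreover have "r n - ln q / ln 9 = (ln (real (N n)) - real n * ln 2 / ln 9 * ln q) / (real n * ln 2)"
      using elim by (simp add: r_def field_simps)
    ultimately show ?case
      by (simp add: abs_divide mult.commute)
  qed
  then have "(\<lambda>n. r n - ln q / ln 9) \<longlonglongrightarrow> 0"
    by (rule Lim_null_comparison) (rule lim_const_over_n)
  then have "(\<lambda>n. ereal (r n)) \<longlonglongrightarrow> ereal (ln q / ln 9)"
    by (simp add: LIM_zero_iff)
  then show ?thesis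
    unfolding r_def by (intro lim_imp_Limsup) simp_all
qed

lemma upper_box_dim_graph_point:
  assumes "\<And>s t. \<phi> s t \<le> 2"
  shows "upper_box_dim (range (graph_point \<phi>)) = ereal (ln (real (4 * card (range (case_prod \<phi>)))) / ln 9)"
  unfolding upper_box_dim_def
proof (rule limsup_ln_ratio_eq)
  show "0 < 4 * card (range (case_prod \<phi>))"
    by (simp add: card_gt_0_iff)
qed (use sep_number_graph_le[of \<phi>, OF assms] sep_number_graph_ge[of \<phi>, OF assms] in auto)

lemma digit_eq_of_bool: "digit b = real (of_bool b)"
  by (simp add: digit_def)

lemma cantor_f_expansion:
  "cantor_f (cantor_pt a) = ternary_sum (\<lambda>j. real (pair_digits (\<lambda>s t. of_bool s) a j))"
  unfolding cantor_f_cantor_pt by (simp add: cantor_pt_def ternary_sum_def pair_digits_def digit_eq_of_bool)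

lemma cantor_g_expansion:
  "cantor_g (cantor_pt a) = ternary_sum (\<lambda>j. real (pair_digits (\<lambda>s t. of_bool t) a j))"
  unfolding cantor_g_cantor_pt by (simp add: cantor_pt_def ternary_sum_def pair_digits_def digit_eq_of_bool)

lemma cantor_f_plus_g_expansion:
  "cantor_f (cantor_pt a) + cantor_g (cantor_pt a) =
     ternary_sum (\<lambda>j. real (pair_digits (\<lambda>s t. of_bool s + of_bool t) a j))"
  unfolding cantor_f_expansion cantor_g_expansion
  by (subst ternary_sum_add[where D=1]) (simp_all add: pair_digits_def)

lemma range_of_bool_fst: "range (\<lambda>(s, t). of_bool s :: nat) = {0, 1}"
  by (auto simp: image_iff)

lemma range_of_bool_snd: "range (\<lambda>(s, t). of_bool t :: nat) = {0, 1}"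
  by (auto simp: image_iff)

lemma range_of_bool_sum: "range (\<lambda>(s, t). of_bool s + of_bool t :: nat) = {0, 1, 2}"
  by (auto simp: image_iff) blast+

lemma log_constants:
  "ln 12 / ln 9 = 1/2 + ln 2 / ln (3::real)" "1/2 + ln 2 / ln 3 > (1::real)" "ln 8 / ln 9 < (1::real)"
proof -
  have "ln (12::real) = 2 * ln 2 + ln 3" "ln (9::real) = 2 * ln 3" "ln (4::real) = 2 * ln 2"
    using ln_mult[of "4::real" 3] ln_realpow[of "2::real" 2] ln_realpow[of "3::real" 2] by simp_all
  moreover have "ln (3::real) < ln 4" "ln (8::real) < ln 9"
    by simp_all
  ultimately show "ln 12 / ln 9 = 1/2 + ln 2 / ln (3::real)" "1/2 + ln 2 / ln 3 > (1::real)"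
    "ln 8 / ln 9 < (1::real)"
    by (simp_all add: field_simps)
qed

theorem mainTheorem3:
  shows "continuous_on cantorK cantor_f \<and> continuous_on cantorK cantor_g \<and>
    upper_box_dim (graph_on cantorK (\<lambda>x. cantor_f x + cantor_g x)) = ereal (1/2 + ln 2 / ln 3) \<and>
    1/2 + ln 2 / ln 3 > (1::real) \<and>
    upper_box_dim (graph_on cantorK cantor_f) = ereal (ln 8 / ln 9) \<and>
    upper_box_dim (graph_on cantorK cantor_g) = ereal (ln 8 / ln 9) \<and>
    ln 8 / ln 9 < (1::real)"
proof -
  have "continuous_on cantorK cantor_f" "continuous_on cantorK cantor_g"
    by (rule continuous_on_cantorK_reindex, rule cantor_f_cantor_pt cantor_g_cantor_pt)+
  moreover have "graph_on cantorK cantor_f = range (graph_point (\<lambda>s t. of_bool s))"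
    "graph_on cantorK cantor_g = range (graph_point (\<lambda>s t. of_bool t))"
    "graph_on cantorK (\<lambda>x. cantor_f x + cantor_g x) = range (graph_point (\<lambda>s t. of_bool s + of_bool t))"
    by (rule graph_on_cantorK_eq, rule cantor_f_expansion cantor_g_expansion cantor_f_plus_g_expansion)+
  moreover have "upper_box_dim (range (graph_point (\<lambda>s t. of_bool s))) = ereal (ln 8 / ln 9)"
    "upper_box_dim (range (graph_point (\<lambda>s t. of_bool t))) = ereal (ln 8 / ln 9)"
    "upper_box_dim (range (graph_point (\<lambda>s t. of_bool s + of_bool t))) = ereal (ln 12 / ln 9)"
    by (subst upper_box_dim_graph_point; simp add: range_of_bool_fst range_of_bool_snd range_of_bool_sum)+
  ultimately show ?thesis
    using log_constants by simp
qed

end
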